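(* For every integer $n\geqslant 2$ there exists a finite simple graph $G$ with $\mathrm{diam}(G)=2$ and $\mathrm{diam}(D_2(G))=n$.
   Context: All graphs are finite, simple and undirected. For a graph $G$, $\mathrm{d}_G(x,y)$ denotes the length of a shortest path between $x$ and $y$, and $\mathrm{diam}(G)$ is the maximum distance between vertices of $G$. The $2$-distance graph $D_2(G)$ of $G$ is the graph with vertex set $V(G)$ in which two vertices $x,y$ are adjacent if and only if $\mathrm{d}_G(x,y)=2$. *)

theory Defs
  imports Main
begin

definition simple_graph :: "'a set \<Rightarrow> ('a \<Rightarrow> 'a \<Rightarrow> bool) \<Rightarrow> bool" where
  "simple_graph V E \<longleftrightarrow> finite V \<and> (\<forall>x y. E x y \<longrightarrow> x \<in> V \<and> y \<in> V)
     \<and> (\<forall>x. \<not> E x x) \<and> (\<forall>x y. E x y \<longrightarrow> E y x)"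

definition walk :: "'a set \<Rightarrow> ('a \<Rightarrow> 'a \<Rightarrow> bool) \<Rightarrow> 'a list \<Rightarrow> bool" where
  "walk V E p \<longleftrightarrow> p \<noteq> [] \<and> set p \<subseteq> V \<and> (\<forall>i. Suc i < length p \<longrightarrow> E (p ! i) (p ! Suc i))"

definition reachable_in :: "'a set \<Rightarrow> ('a \<Rightarrow> 'a \<Rightarrow> bool) \<Rightarrow> nat \<Rightarrow> 'a \<Rightarrow> 'a \<Rightarrow> bool" where
  "reachable_in V E k x y \<longleftrightarrow>
     (\<exists>p. walk V E p \<and> length p = Suc k \<and> hd p = x \<and> last p = y)"

definition dist :: "'a set \<Rightarrow> ('a \<Rightarrow> 'a \<Rightarrow> bool) \<Rightarrow> 'a \<Rightarrow> 'a \<Rightarrow> nat" where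
  "dist V E x y = (LEAST k. reachable_in V E k x y)"

definition connected_graph :: "'a set \<Rightarrow> ('a \<Rightarrow> 'a \<Rightarrow> bool) \<Rightarrow> bool" where
  "connected_graph V E \<longleftrightarrow> (\<forall>x\<in>V. \<forall>y\<in>V. \<exists>k. reachable_in V E k x y)"

text \<open>diam(G) = d holds iff G is connected (so that all distances are finite),
  nonempty, and the maximum distance between vertices equals d.\<close>
definition has_diam :: "'a set \<Rightarrow> ('a \<Rightarrow> 'a \<Rightarrow> bool) \<Rightarrow> nat \<Rightarrow> bool" where
  "has_diam V E d \<longleftrightarrow> V \<noteq> {} \<and> connected_graph V E \<and>
     (\<forall>x\<in>V. \<forall>y\<in>V. dist V E x y \<le> d) \<and> (\<exists>x\<in>V. \<exists>y\<in>V. dist V E x y = d)"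

definition dist2_graph :: "'a set \<Rightarrow> ('a \<Rightarrow> 'a \<Rightarrow> bool) \<Rightarrow> 'a \<Rightarrow> 'a \<Rightarrow> bool" where
  "dist2_graph V E x y \<longleftrightarrow> x \<in> V \<and> y \<in> V \<and> (\<exists>k. reachable_in V E k x y) \<and> dist V E x y = 2"

end

theory Submission
  imports Defs
begin

(* Take G to be the complement of the cycle C_(2n+1). For n >= 2 any two consecutive cycle
   vertices x, x+1 have the common G-neighbour x+3, so G has diameter 2 and two vertices are
   at G-distance 2 exactly when they are adjacent in the cycle. Hence D_2(G) is the cycle
   C_(2n+1) itself, whose diameter is n. *)

lemma walk_rev:
  assumes "walk V E p" and "\<And>x y. E x y \<Longrightarrow> E y x"
  shows "walk V E (rev p)"
  unfolding walk_def
proof (intro conjI allI impI)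
  show "rev p \<noteq> []" "set (rev p) \<subseteq> V" using assms(1) by (auto simp: walk_def)
  fix i assume i: "Suc i < length (rev p)"
  then have "E (p ! (length p - Suc (Suc i))) (p ! Suc (length p - Suc (Suc i)))"
    using assms(1) unfolding walk_def by auto
  moreover have "Suc (length p - Suc (Suc i)) = length p - Suc i" using i by auto
  ultimately have "E (rev p ! Suc i) (rev p ! i)"
    using i by (simp add: rev_nth)
  then show "E (rev p ! i) (rev p ! Suc i)" by (rule assms(2))
qed

lemma reachable_in_sym:
  assumes "\<And>x y. E x y \<Longrightarrow> E y x" and "reachable_in V E k x y"
  shows "reachable_in V E k y x"
  using assms walk_rev[of V E _] unfolding reachable_in_def
  by (metis hd_rev last_rev length_rev)

lemma reachable_in_0_iff: "reachable_in V E 0 x y \<longleftrightarrow> x \<in> V \<and> x = y"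
  unfolding reachable_in_def walk_def by (auto simp: length_Suc_conv intro!: exI[of _ "[x]"])

lemma reachable_in_1_iff: "reachable_in V E 1 x y \<longleftrightarrow> x \<in> V \<and> y \<in> V \<and> E x y"
  unfolding reachable_in_def walk_def
  by (auto simp: length_Suc_conv less_Suc_eq intro!: exI[of _ "[x, y]"])

lemma reachable_in_2I:
  "E x w \<Longrightarrow> E w y \<Longrightarrow> x \<in> V \<Longrightarrow> w \<in> V \<Longrightarrow> y \<in> V \<Longrightarrow> reachable_in V E 2 x y"
  unfolding reachable_in_def walk_def
  by (rule exI[of _ "[x, w, y]"]) (auto simp: less_Suc_eq nth_Cons split: nat.splits)

lemma dist_eqI:
  "reachable_in V E k x y \<Longrightarrow> (\<And>j. j < k \<Longrightarrow> \<not> reachable_in V E j x y) \<Longrightarrow> dist V E x y = k"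
  unfolding dist_def by (rule Least_equality) (auto simp: not_less[symmetric])

lemma dist_le: "reachable_in V E k x y \<Longrightarrow> dist V E x y \<le> k"
  unfolding dist_def by (rule Least_le)

lemma has_diamI:
  assumes "x \<in> V" "y \<in> V" "dist V E x y = d"
    and "\<And>x y. x \<in> V \<Longrightarrow> y \<in> V \<Longrightarrow> \<exists>k\<le>d. reachable_in V E k x y"
  shows "has_diam V E d"
proof -
  have "\<exists>k. reachable_in V E k x y \<and> dist V E x y \<le> d" if xy: "x \<in> V" "y \<in> V" for x y
  proof -
    obtain k where "k \<le> d" "reachable_in V E k x y" using assms(4)[OF xy] by blast
    then show ?thesis using dist_le[of V E k x y] by auto
  qed
  then show ?thesis
    unfolding has_diam_def connected_graph_def using assms(1-3) by blast
qed

definition complement_graph :: "'a set \<Rightarrow> ('a \<Rightarrow> 'a \<Rightarrow> bool) \<Rightarrow> 'a \<Rightarrow> 'a \<Rightarrow> bool" where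
  "complement_graph V E x y \<longleftrightarrow> x \<in> V \<and> y \<in> V \<and> x \<noteq> y \<and> \<not> E x y"

lemma simple_graph_complement_graph:
  "simple_graph V E \<Longrightarrow> simple_graph V (complement_graph V E)"
  unfolding simple_graph_def complement_graph_def by blast

lemma complement_graph_complement_graph:
  "simple_graph V E \<Longrightarrow> complement_graph V (complement_graph V E) = E"
  unfolding simple_graph_def complement_graph_def by blast

definition nonadjacent_common_neighbour :: "'a set \<Rightarrow> ('a \<Rightarrow> 'a \<Rightarrow> bool) \<Rightarrow> bool" where
  "nonadjacent_common_neighbour V E \<longleftrightarrow>
     (\<forall>x\<in>V. \<forall>y\<in>V. x \<noteq> y \<and> \<not> E x y \<longrightarrow> (\<exists>w. E x w \<and> E w y))"

lemma reachable_in_le_2: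
  assumes "simple_graph V E" "nonadjacent_common_neighbour V E" "x \<in> V" "y \<in> V"
  shows "\<exists>k\<le>2. reachable_in V E k x y"
proof -
  consider "x = y" | "E x y" | w where "E x w" "E w y"
    using assms(2-4) unfolding nonadjacent_common_neighbour_def by blast
  then show ?thesis
  proof cases
    case 1
    then show ?thesis
      using assms(3) reachable_in_0_iff[of V E x y] by (intro exI[of _ 0]) auto
  next
    case 2
    then show ?thesis
      using assms(3,4) reachable_in_1_iff[of V E x y] by (intro exI[of _ 1]) auto
  next
    case 3
    then have "w \<in> V" using assms(1) unfolding simple_graph_def by blast
    then show ?thesis
      using 3 assms(3,4) reachable_in_2I[of E x w y V] by (intro exI[of _ 2]) auto
  qed
qed

lemma dist_eq_2_iff:
  assumes "simple_graph V E" "nonadjacent_common_neighbour V E" "x \<in> V" "y \<in> V"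
  shows "dist V E x y = 2 \<longleftrightarrow> x \<noteq> y \<and> \<not> E x y"
proof
  have "x = y \<Longrightarrow> dist V E x y \<le> 0"
    using assms(3) dist_le[of V E 0 x y] reachable_in_0_iff[of V E x y] by simp
  moreover have "E x y \<Longrightarrow> dist V E x y \<le> 1"
    using assms(3,4) dist_le[of V E 1 x y] reachable_in_1_iff[of V E x y] by simp
  moreover assume "dist V E x y = 2"
  ultimately show "x \<noteq> y \<and> \<not> E x y" by auto
next
  assume nonadjacent: "x \<noteq> y \<and> \<not> E x y"
  have shorter: "\<not> reachable_in V E j x y" if "j < 2" for j
    using less_2_cases[OF that] nonadjacent reachable_in_0_iff[of V E x y]
      reachable_in_1_iff[of V E x y] by auto
  obtain k where "k \<le> 2" "reachable_in V E k x y"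
    using reachable_in_le_2[OF assms] by blast
  then have "reachable_in V E 2 x y" using shorter[of k] by (cases "k < 2") auto
  then show "dist V E x y = 2" using shorter by (rule dist_eqI)
qed

lemma has_diam_2I:
  assumes "simple_graph V E" "nonadjacent_common_neighbour V E"
    and "x \<in> V" "y \<in> V" "x \<noteq> y" "\<not> E x y"
  shows "has_diam V E 2"
proof (rule has_diamI)
  show "x \<in> V" "y \<in> V" by fact+
  show "dist V E x y = 2" using dist_eq_2_iff[OF assms(1-4)] assms(5,6) by blast
  show "\<exists>k\<le>2. reachable_in V E k u v" if "u \<in> V" "v \<in> V" for u v
    using reachable_in_le_2[OF assms(1,2) that] .
qed

lemma dist2_graph_eq_complement_graph:
  assumes "simple_graph V E" "nonadjacent_common_neighbour V E"
  shows "dist2_graph V E = complement_graph V E"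
proof (intro ext)
  fix x y
  show "dist2_graph V E x y \<longleftrightarrow> complement_graph V E x y"
  proof (cases "x \<in> V \<and> y \<in> V")
    case True
    then show ?thesis
      unfolding dist2_graph_def complement_graph_def
      using dist_eq_2_iff[OF assms, of x y] reachable_in_le_2[OF assms, of x y] by blast
  next
    case False
    then show ?thesis unfolding dist2_graph_def complement_graph_def by blast
  qed
qed

text \<open>For m \<ge> 3 this is the cycle 0 - 1 - ... - (m - 1) - 0.\<close>
definition cycle_graph :: "nat \<Rightarrow> nat \<Rightarrow> nat \<Rightarrow> bool" where
  "cycle_graph m x y \<longleftrightarrow> x < m \<and> y < m \<and>
     (y = Suc x \<or> x = Suc y \<or> (x = 0 \<and> y = m - 1) \<or> (x = m - 1 \<and> y = 0))"

lemma simple_graph_cycle_graph: "2 \<le> m \<Longrightarrow> simple_graph {..<m} (cycle_graph m)"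
  unfolding simple_graph_def cycle_graph_def by auto

lemma cycle_graph_sym: "cycle_graph m x y \<Longrightarrow> cycle_graph m y x"
  unfolding cycle_graph_def by auto

lemma cycle_graph_mod_Suc:
  assumes "0 < m"
  shows "cycle_graph m (a mod m) (Suc a mod m)"
proof -
  have "a mod m < m" using assms by simp
  then show ?thesis unfolding cycle_graph_def by (auto simp: mod_Suc)
qed

lemma reachable_in_cycle_graph_add:
  assumes "x < m"
  shows "reachable_in {..<m} (cycle_graph m) d x ((x + d) mod m)"
  unfolding reachable_in_def
proof (rule exI[of _ "map (\<lambda>i. (x + i) mod m) [0..<Suc d]"], intro conjI)
  show "walk {..<m} (cycle_graph m) (map (\<lambda>i. (x + i) mod m) [0..<Suc d])"
    unfolding walk_def using assms cycle_graph_mod_Suc[of m] by (auto simp del: upt_Suc)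
qed (use assms in \<open>auto simp: hd_map last_map simp del: upt_Suc\<close>)

lemma reachable_in_cycle_graph_half:
  assumes "x < m" "y < m"
  shows "\<exists>k\<le>m div 2. reachable_in {..<m} (cycle_graph m) k x y"
proof -
  have ordered: "\<exists>k\<le>m div 2. reachable_in {..<m} (cycle_graph m) k x y"
    if "x \<le> y" "y < m" for x y
  proof (cases "y - x \<le> m div 2")
    case True
    then show ?thesis using that reachable_in_cycle_graph_add[of x m "y - x"] by auto
  next
    case False
    have "(y + (m - (y - x))) mod m = x" using that by simp
    then have "reachable_in {..<m} (cycle_graph m) (m - (y - x)) y x"
      using that reachable_in_cycle_graph_add[of y m "m - (y - x)"] by simp
    then show ?thesis
      using False reachable_in_sym[OF cycle_graph_sym] by (intro exI[of _ "m - (y - x)"]) auto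
  qed
  show ?thesis
  proof (cases "x \<le> y")
    case True
    then show ?thesis using ordered assms by blast
  next
    case False
    then show ?thesis using ordered[of y x] assms reachable_in_sym[OF cycle_graph_sym] by force
  qed
qed

lemma walk_cycle_graph_from_0:
  assumes "walk {..<m} (cycle_graph m) p" "hd p = 0" "i < length p"
  shows "min (p ! i) (m - p ! i) \<le> i"
  using assms(3)
proof (induction i)
  case 0
  then show ?case using assms(2) by (cases p) auto
next
  case (Suc i)
  then have "cycle_graph m (p ! i) (p ! Suc i)" using assms(1) unfolding walk_def by auto
  then show ?case using Suc unfolding cycle_graph_def by auto
qed

lemma dist_cycle_graph_half:
  assumes "0 < m"
  shows "dist {..<m} (cycle_graph m) 0 (m div 2) = m div 2"
proof (rule dist_eqI)
  show "reachable_in {..<m} (cycle_graph m) (m div 2) 0 (m div 2)"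
    using assms reachable_in_cycle_graph_add[of 0 m "m div 2"] by simp
next
  fix j assume "j < m div 2"
  show "\<not> reachable_in {..<m} (cycle_graph m) j 0 (m div 2)"
  proof
    assume "reachable_in {..<m} (cycle_graph m) j 0 (m div 2)"
    then obtain p where p: "walk {..<m} (cycle_graph m) p" "length p = Suc j" "hd p = 0"
        "p ! j = m div 2"
      unfolding reachable_in_def by (metis last_conv_nth diff_Suc_1 list.size(3) nat.distinct(1))
    show False using walk_cycle_graph_from_0[OF p(1,3), of j] p(2,4) \<open>j < m div 2\<close> by auto
  qed
qed

lemma has_diam_cycle_graph: "0 < m \<Longrightarrow> has_diam {..<m} (cycle_graph m) (m div 2)"
  using dist_cycle_graph_half reachable_in_cycle_graph_half
  by (intro has_diamI[of 0 _ "m div 2"]) auto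

text \<open>The cycle neighbours x and x + 1 have the common non-neighbour x + 3 (mod m);
  m \<ge> 5 keeps x + 3 apart from x - 1.\<close>
lemma complement_cycle_graph_common_neighbour:
  "5 \<le> m \<Longrightarrow> cycle_graph m x y \<Longrightarrow> y = Suc x \<or> (x = m - 1 \<and> y = 0) \<Longrightarrow>
    w = (if x + 3 < m then x + 3 else x + 3 - m) \<Longrightarrow>
    complement_graph {..<m} (cycle_graph m) y w \<and> complement_graph {..<m} (cycle_graph m) w x"
  unfolding complement_graph_def cycle_graph_def lessThan_iff
  by (cases "x + 3 < m"; elim disjE; simp; linarith)

lemma nonadjacent_common_neighbour_complement_cycle_graph:
  assumes "5 \<le> m"
  shows "nonadjacent_common_neighbour {..<m} (complement_graph {..<m} (cycle_graph m))"
  unfolding nonadjacent_common_neighbour_def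
proof (intro ballI impI)
  let ?G = "complement_graph {..<m} (cycle_graph m)"
  have complement_sym: "?G a b \<Longrightarrow> ?G b a" for a b
    using cycle_graph_sym[of m b a] unfolding complement_graph_def by blast
  fix x y
  assume "x \<in> {..<m}" "y \<in> {..<m}" "x \<noteq> y \<and> \<not> ?G x y"
  then have xy: "cycle_graph m x y" unfolding complement_graph_def by blast
  then consider "y = Suc x \<or> (x = m - 1 \<and> y = 0)" | "x = Suc y \<or> (y = m - 1 \<and> x = 0)"
    unfolding cycle_graph_def by auto
  then show "\<exists>w. ?G x w \<and> ?G w y"
  proof cases
    case 1
    then show ?thesis
      using complement_cycle_graph_common_neighbour[OF assms xy 1 refl] complement_sym
      by meson
  next
    case 2
    then show ?thesis
      using complement_cycle_graph_common_neighbour[OF assms cycle_graph_sym[OF xy] 2 refl] by blast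
  qed
qed

theorem mainTheorem1:
  fixes n :: nat
  assumes "n \<ge> 2"
  shows "\<exists>(V :: nat set) E. simple_graph V E \<and> has_diam V E 2
           \<and> has_diam V (dist2_graph V E) n"
proof -
  define m where "m = 2 * n + 1"
  have "5 \<le> m" using assms unfolding m_def by simp
  let ?G = "complement_graph {..<m} (cycle_graph m)"
  have cycle: "simple_graph {..<m} (cycle_graph m)"
    using \<open>5 \<le> m\<close> by (simp add: simple_graph_cycle_graph)
  then have G: "simple_graph {..<m} ?G"
    by (rule simple_graph_complement_graph)
  have common: "nonadjacent_common_neighbour {..<m} ?G"
    using \<open>5 \<le> m\<close> by (rule nonadjacent_common_neighbour_complement_cycle_graph)
  have "cycle_graph m 0 1"
    unfolding cycle_graph_def using \<open>5 \<le> m\<close> by simp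
  then have "has_diam {..<m} ?G 2"
    using has_diam_2I[OF G common, of 0 1] \<open>5 \<le> m\<close> unfolding complement_graph_def by simp
  moreover have "dist2_graph {..<m} ?G = cycle_graph m"
    using dist2_graph_eq_complement_graph[OF G common] complement_graph_complement_graph[OF cycle]
    by simp
  moreover have "has_diam {..<m} (cycle_graph m) n"
    using has_diam_cycle_graph[of m] unfolding m_def by simp
  ultimately show ?thesis using G by (intro exI[of _ "{..<m}"] exI[of _ ?G]) simp
qed

end
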